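(* Let $X_1,X_2$ be nonnegative real random variables, each with an absolutely continuous distribution function $F_i$ with density $f_i$. Let $0<\lambda_1\le\lambda_2\le1$, and define \[ I:=\sup_{\varphi_1,\varphi_2}\int_0^\infty\big(\varphi_1(t)K_1(t)+\varphi_2(t)K_2(t)\big)\,\mathrm{d}t, \] the supremum over all functions $\varphi_i:\mathbb{R}_+\to[0,\lambda_i]$ ($i=1,2$) such that $\varphi_1+\varphi_2$ is nondecreasing, where $K_1(t)=f_2(t)(H_1(t)-r_1)-G_1(t)G_2(t)$ and $K_2(t)=f_1(t)(H_2(t)-r_2)-G_1(t)G_2(t)$. Then \[ I\le\frac1e\Big(\lambda_2r_1+\lambda_1r_2+\lambda_1(e-1)\min\{r_1,r_2\}\Big). \]
   Context: $G_i(t)=1-F_i(t)=\mathbb{P}[X_i\ge t]$, $H_i(t)=\int_0^tG_i(u)\,\mathrm{d}u$, and $r_i=\textsc{Rev}(X_i)=\sup_{p\ge0}p\,\mathbb{P}[X_i\ge p]$ is the optimal one-good revenue from $X_i$. All functions are Borel measurable. *)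

theory Defs
  imports "HOL-Probability.Probability"
begin

definition surv :: "'a measure \<Rightarrow> ('a \<Rightarrow> real) \<Rightarrow> real \<Rightarrow> real" where
  "surv M X t = measure M {\<omega> \<in> space M. X \<omega> \<ge> t}"

definition cumsurv :: "'a measure \<Rightarrow> ('a \<Rightarrow> real) \<Rightarrow> real \<Rightarrow> real" where
  "cumsurv M X t = (LINT u:{0..t}|lborel. surv M X u)"

definition Rev :: "'a measure \<Rightarrow> ('a \<Rightarrow> real) \<Rightarrow> real" where
  "Rev M X = Sup {p * surv M X p | p. p \<ge> 0}"

end

theory Submission
  imports Defs
begin

text \<open>
Write \<open>\<psi> = \<phi>1 + \<phi>2\<close> and \<open>P\<^sub>1 = f\<^sub>2 max 0 (H\<^sub>1 - r\<^sub>1)\<close>, \<open>P\<^sub>2 = f\<^sub>1 max 0 (H\<^sub>2 - r\<^sub>2)\<close>.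
Pointwise the integrand is at most
\<open>min \<psi> \<lambda>\<^sub>1 (P\<^sub>1 + P\<^sub>2 - G\<^sub>1 G\<^sub>2) + (min \<psi> \<lambda>\<^sub>2 - min \<psi> \<lambda>\<^sub>1) (P\<^sub>2 - G\<^sub>1 G\<^sub>2)\<close>,
and both weights are nondecreasing with values in \<open>[0, \<lambda>\<^sub>1]\<close> and \<open>[0, \<lambda>\<^sub>2 - \<lambda>\<^sub>1]\<close>.
By the layer cake formula, a nondecreasing weight with values in \<open>[0, L]\<close> integrates \<open>h\<close>
to at most \<open>L\<close> times the largest tail integral \<open>\<integral>\<^sub>a\<^sup>\<infinity> h\<close>. By Tonelli, the tail of \<open>P\<^sub>1\<close>
from \<open>a\<close> is at most \<open>G\<^sub>2(a)\<close> times the integral of \<open>G\<^sub>1\<close> over \<open>[r\<^sub>1, a)\<close> plus the tail of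
\<open>G\<^sub>1 G\<^sub>2\<close> from \<open>max a r\<^sub>1\<close>. The bound \<open>G\<^sub>i(t) \<le> r\<^sub>i / t\<close> turns these into logarithmic
expressions in \<open>a\<close>, whose maxima are \<open>(r\<^sub>1 + r\<^sub>2) / e + (1 - 1/e) min r\<^sub>1 r\<^sub>2\<close> for the tails
of \<open>P\<^sub>1 + P\<^sub>2 - G\<^sub>1 G\<^sub>2\<close> and \<open>r\<^sub>1 / e\<close> for those of \<open>P\<^sub>2 - G\<^sub>1 G\<^sub>2\<close>.
\<close>

lemma nn_integral_indicator_eq_set_integral:
  fixes h :: "real \<Rightarrow> real"
  assumes "set_integrable lborel A h" and "\<And>x. x \<in> A \<Longrightarrow> 0 \<le> h x"
  shows "(\<integral>\<^sup>+x. ennreal (h x) * indicator A x \<partial>lborel) = ennreal (LINT x:A|lborel. h x)"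
proof -
  have "(\<integral>\<^sup>+x. ennreal (h x) * indicator A x \<partial>lborel)
      = (\<integral>\<^sup>+x. ennreal (indicator A x *\<^sub>R h x) \<partial>lborel)"
    by (intro nn_integral_cong) (auto split: split_indicator)
  also have "\<dots> = ennreal (LINT x:A|lborel. h x)"
    using assms unfolding set_integrable_def set_lebesgue_integral_def
    by (intro nn_integral_eq_integral) (auto split: split_indicator)
  finally show ?thesis .
qed

lemma set_integrableI_nonneg:
  fixes h :: "real \<Rightarrow> real"
  assumes "h \<in> borel_measurable borel" "A \<in> sets borel" "\<And>x. x \<in> A \<Longrightarrow> 0 \<le> h x"
    and "(\<integral>\<^sup>+x. ennreal (h x) * indicator A x \<partial>lborel) < \<infinity>"
  shows "set_integrable lborel A h"
  unfolding set_integrable_def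
proof (rule integrableI_bounded)
  have "(\<integral>\<^sup>+x. ennreal (norm (indicator A x *\<^sub>R h x)) \<partial>lborel)
      = (\<integral>\<^sup>+x. ennreal (h x) * indicator A x \<partial>lborel)"
    using assms(3) by (intro nn_integral_cong) (auto split: split_indicator)
  then show "(\<integral>\<^sup>+x. ennreal (norm (indicator A x *\<^sub>R h x)) \<partial>lborel) < \<infinity>"
    using assms(4) by simp
qed (use assms in simp)

lemma set_integrable_unit_bounded:
  fixes h :: "real \<Rightarrow> real"
  assumes "h \<in> borel_measurable borel" "\<And>x. 0 \<le> h x" "\<And>x. h x \<le> 1"
    and "A \<in> sets borel" "emeasure lborel A < \<infinity>"
  shows "set_integrable lborel A h"
proof (rule set_integrableI_nonneg)
  have "(\<integral>\<^sup>+x. ennreal (h x) * indicator A x \<partial>lborel) \<le> (\<integral>\<^sup>+x. indicator A x \<partial>lborel)"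
    using assms by (intro nn_integral_mono) (auto split: split_indicator)
  then show "(\<integral>\<^sup>+x. ennreal (h x) * indicator A x \<partial>lborel) < \<infinity>"
    using assms(4,5) by (simp add: le_less_trans)
qed (use assms in auto)

lemma set_integral_upper_set_le:
  fixes h :: "real \<Rightarrow> real" and S :: "real set"
  assumes [measurable]: "h \<in> borel_measurable borel" "S \<in> sets borel" and "S \<subseteq> {0..}"
    and up: "\<And>s t. s \<in> S \<Longrightarrow> s \<le> t \<Longrightarrow> t \<in> S"
    and tail: "\<And>a. 0 \<le> a \<Longrightarrow> (LINT t:{a..}|lborel. h t) \<le> \<beta>" and "0 \<le> \<beta>"
  shows "(LINT t:S|lborel. h t) \<le> \<beta>"
proof (cases "S = {}")
  case True
  then show ?thesis using \<open>0 \<le> \<beta>\<close> by (simp add: set_lebesgue_integral_def)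
next
  case False
  have "bdd_below S" using \<open>S \<subseteq> {0..}\<close> by (auto intro: bdd_belowI[of _ 0])
  have above_Inf: "t \<in> S" if "Inf S < t" for t
    using that up cInf_less_iff[OF False \<open>bdd_below S\<close>] by (auto intro: less_imp_le)
  have "AE t in lborel. t \<noteq> Inf S" by (rule AE_lborel_singleton)
  then have "AE t in lborel. t \<in> S \<longleftrightarrow> t \<in> {Inf S..}"
    by eventually_elim (use above_Inf \<open>bdd_below S\<close> in \<open>auto simp: cInf_lower\<close>)
  then have "(LINT t:S|lborel. h t) = (LINT t:{Inf S..}|lborel. h t)"
    by (intro set_integral_cong_set) (auto simp: set_borel_measurable_def)
  also have "\<dots> \<le> \<beta>"
    using False \<open>S \<subseteq> {0..}\<close> by (intro tail cInf_greatest) auto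
  finally show ?thesis .
qed

lemma set_integrable_bounded_mult:
  fixes h u :: "real \<Rightarrow> real"
  assumes "set_integrable lborel A h" "h \<in> borel_measurable borel" "u \<in> borel_measurable borel"
    and "A \<in> sets borel" "\<And>t. t \<in> A \<Longrightarrow> \<bar>u t\<bar> \<le> K"
  shows "set_integrable lborel A (\<lambda>t. u t * h t)"
proof (rule set_integrable_bound[where f = "\<lambda>t. K * h t"])
  show "set_integrable lborel A (\<lambda>t. K * h t)" using assms(1) by simp
  show "set_borel_measurable lborel A (\<lambda>t. u t * h t)"
    using assms(2-4) unfolding set_borel_measurable_def by simp
  show "AE t\<in>A in lborel. norm (u t * h t) \<le> norm (K * h t)"
  proof (rule AE_I2, rule impI)
    fix t assume "t \<in> A"
    then have "\<bar>u t\<bar> * \<bar>h t\<bar> \<le> \<bar>K\<bar> * \<bar>h t\<bar>"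
      using assms(5)[of t] by (intro mult_right_mono) auto
    then show "norm (u t * h t) \<le> norm (K * h t)" by (simp add: abs_mult)
  qed
qed

lemma integral_subgraph_slice:
  fixes a k :: real
  assumes "0 \<le> a"
  shows "(\<integral>c. (if 0 \<le> c \<and> c < a then k else 0) \<partial>lborel) = a * k"
proof -
  have "(\<integral>c. (if 0 \<le> c \<and> c < a then k else 0) \<partial>lborel) = (\<integral>c. indicator {0..<a} c * k \<partial>lborel)"
    by (intro Bochner_Integration.integral_cong) (auto simp: indicator_def)
  then show ?thesis using assms by simp
qed

lemma integrable_subgraph:
  fixes h u :: "real \<Rightarrow> real"
  assumes [measurable]: "h \<in> borel_measurable borel" "u \<in> borel_measurable borel"
    and h: "set_integrable lborel {0..} h" and u: "\<And>t. 0 \<le> t \<Longrightarrow> 0 \<le> u t \<and> u t \<le> L"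
  shows "integrable (lborel \<Otimes>\<^sub>M lborel) (\<lambda>(t, c). if 0 \<le> t \<and> 0 \<le> c \<and> c < u t then h t else 0)"
proof (rule lborel_pair.Fubini_integrable)
  have "set_integrable lborel {0..} (\<lambda>t. u t * \<bar>h t\<bar>)"
    using u by (intro set_integrable_bounded_mult[OF set_integrable_abs[OF h], where K = L]) auto
  then have "integrable lborel (\<lambda>t. indicator {0..} t * (u t * \<bar>h t\<bar>))"
    by (simp add: set_integrable_def)
  moreover have "(\<integral>c. norm (if 0 \<le> t \<and> 0 \<le> c \<and> c < u t then h t else 0) \<partial>lborel)
      = indicator {0..} t * (u t * \<bar>h t\<bar>)" for t
  proof -
    have "norm (if 0 \<le> t \<and> 0 \<le> c \<and> c < u t then h t else 0)
        = (if 0 \<le> t \<and> 0 \<le> c \<and> c < u t then \<bar>h t\<bar> else 0)" for c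
      by simp
    then show ?thesis
      using integral_subgraph_slice[of "u t"] u[of t] by (cases "0 \<le> t") simp_all
  qed
  ultimately show "integrable lborel (\<lambda>t. \<integral>c. norm (case (t, c) of (t, c) \<Rightarrow>
      if 0 \<le> t \<and> 0 \<le> c \<and> c < u t then h t else 0) \<partial>lborel)"
    by simp
  show "AE t in lborel. integrable lborel (\<lambda>c. case (t, c) of (t, c) \<Rightarrow>
      if 0 \<le> t \<and> 0 \<le> c \<and> c < u t then h t else 0)"
  proof (rule AE_I2)
    fix t :: real
    have "(\<lambda>c. if 0 \<le> t \<and> 0 \<le> c \<and> c < u t then h t else 0)
        = (\<lambda>c. indicator {0..<u t} c * (if 0 \<le> t then h t else 0))"
      by (auto simp: indicator_def)
    then show "integrable lborel (\<lambda>c. case (t, c) of (t, c) \<Rightarrow>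
        if 0 \<le> t \<and> 0 \<le> c \<and> c < u t then h t else 0)"
      by (cases "0 \<le> u t") (simp_all add: integrable_indicator_iff)
  qed
qed measurable

text \<open>Layer cake: \<open>u t = \<integral>\<^sub>0\<^sup>L [c < u t] dc\<close>, and each level set \<open>{t. c < u t}\<close> is an up-set.\<close>

lemma set_integral_mono_weight_le:
  fixes h u :: "real \<Rightarrow> real"
  assumes [measurable]: "h \<in> borel_measurable borel" "u \<in> borel_measurable borel"
    and h: "set_integrable lborel {0..} h"
    and u: "\<And>t. 0 \<le> t \<Longrightarrow> 0 \<le> u t \<and> u t \<le> L" and "mono_on {0..} u"
    and tail: "\<And>a. 0 \<le> a \<Longrightarrow> (LINT t:{a..}|lborel. h t) \<le> \<beta>" and "0 \<le> \<beta>"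
  shows "(LINT t:{0..}|lborel. u t * h t) \<le> L * \<beta>"
proof -
  define F where "F t c = (if 0 \<le> t \<and> 0 \<le> c \<and> c < u t then h t else 0)" for t c :: real
  have F_integrable: "integrable (lborel \<Otimes>\<^sub>M lborel) (case_prod F)"
    unfolding F_def using integrable_subgraph[OF assms(1-3) u] by simp
  have "0 \<le> L" using u[of 0] by simp
  have slice_le: "(\<integral>t. F t c \<partial>lborel) \<le> indicator {0..<L} c * \<beta>" for c
  proof (cases "0 \<le> c \<and> c < L")
    case True
    have "(\<integral>t. F t c \<partial>lborel) = (LINT t:{t. 0 \<le> t \<and> c < u t}|lborel. h t)"
      using True unfolding set_lebesgue_integral_def
      by (intro Bochner_Integration.integral_cong) (auto simp: F_def indicator_def)
    also have "\<dots> \<le> \<beta>"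
    proof (rule set_integral_upper_set_le)
      show "s \<le> t \<Longrightarrow> s \<in> {t. 0 \<le> t \<and> c < u t} \<Longrightarrow> t \<in> {t. 0 \<le> t \<and> c < u t}" for s t
        using mono_onD[OF \<open>mono_on {0..} u\<close>, of s t] by auto
    qed (use tail \<open>0 \<le> \<beta>\<close> in auto)
    finally show ?thesis using True by simp
  next
    case False
    then have "F t c = 0" for t
      using u[of t] by (auto simp: F_def)
    then show ?thesis using False by simp
  qed
  have "(LINT t:{0..}|lborel. u t * h t) = (\<integral>t. (\<integral>c. F t c \<partial>lborel) \<partial>lborel)"
    unfolding set_lebesgue_integral_def
  proof (intro Bochner_Integration.integral_cong)
    show "indicator {0..} t *\<^sub>R (u t * h t) = (\<integral>c. F t c \<partial>lborel)" for t
      using integral_subgraph_slice[of "u t"] u[of t] by (cases "0 \<le> t") (simp_all add: F_def)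
  qed simp
  also have "\<dots> = (\<integral>c. (\<integral>t. F t c \<partial>lborel) \<partial>lborel)"
    by (rule lborel_pair.Fubini_integral[OF F_integrable, symmetric])
  also have "\<dots> \<le> (\<integral>c. indicator {0..<L} c * \<beta> \<partial>lborel)"
    using lborel_pair.integrable_snd[OF F_integrable] slice_le \<open>0 \<le> L\<close>
    by (intro integral_mono) (auto simp: integrable_indicator_iff)
  also have "\<dots> = L * \<beta>"
    using \<open>0 \<le> L\<close> by simp
  finally show ?thesis .
qed

lemma mono_min_diff: "c \<le> d \<Longrightarrow> mono (\<lambda>x::real. min x d - min x c)"
  by (auto intro!: monoI simp: min_def)

lemma set_integral_truncated_weights_le:
  fixes \<psi> R R' :: "real \<Rightarrow> real"
  assumes [measurable]: "\<psi> \<in> borel_measurable borel" "R \<in> borel_measurable borel" "R' \<in> borel_measurable borel"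
    and R: "set_integrable lborel {0..} R" and R': "set_integrable lborel {0..} R'"
    and \<psi>: "\<And>t. 0 \<le> t \<Longrightarrow> 0 \<le> \<psi> t" "mono_on {0..} \<psi>" and "0 \<le> l1" "l1 \<le> l2"
    and tail: "\<And>a. 0 \<le> a \<Longrightarrow> (LINT t:{a..}|lborel. R t) \<le> \<beta>" "0 \<le> \<beta>"
    and tail': "\<And>a. 0 \<le> a \<Longrightarrow> (LINT t:{a..}|lborel. R' t) \<le> \<beta>'" "0 \<le> \<beta>'"
  shows "set_integrable lborel {0..} (\<lambda>t. min (\<psi> t) l1 * R t + (min (\<psi> t) l2 - min (\<psi> t) l1) * R' t)"
    and "(LINT t:{0..}|lborel. min (\<psi> t) l1 * R t + (min (\<psi> t) l2 - min (\<psi> t) l1) * R' t)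
      \<le> l1 * \<beta> + (l2 - l1) * \<beta>'"
proof -
  define u where "u t = min (\<psi> t) l1" for t
  define w where "w t = min (\<psi> t) l2 - min (\<psi> t) l1" for t
  have measurable_uw [measurable]: "u \<in> borel_measurable borel" "w \<in> borel_measurable borel"
    unfolding u_def w_def by measurable
  have u: "0 \<le> u t \<and> u t \<le> l1" and w: "0 \<le> w t \<and> w t \<le> l2 - l1" if "0 \<le> t" for t
    using \<psi>(1)[OF that] \<open>0 \<le> l1\<close> \<open>l1 \<le> l2\<close> by (auto simp: u_def w_def min_def)
  have "mono_on {0..} u"
  proof (rule mono_onI)
    fix s t :: real assume "s \<in> {0..}" "t \<in> {0..}" "s \<le> t"
    then have "\<psi> s \<le> \<psi> t" by (rule mono_onD[OF \<psi>(2)])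
    then show "u s \<le> u t" unfolding u_def by (intro min.mono) auto
  qed
  have "mono_on {0..} w"
  proof (rule mono_onI)
    fix s t :: real assume "s \<in> {0..}" "t \<in> {0..}" "s \<le> t"
    then have "\<psi> s \<le> \<psi> t" by (rule mono_onD[OF \<psi>(2)])
    then show "w s \<le> w t" unfolding w_def by (rule monoD[OF mono_min_diff[OF \<open>l1 \<le> l2\<close>]])
  qed
  have integrable: "set_integrable lborel {0..} (\<lambda>t. u t * R t)" "set_integrable lborel {0..} (\<lambda>t. w t * R' t)"
    using set_integrable_bounded_mult[OF R assms(2) measurable_uw(1), of l1]
      set_integrable_bounded_mult[OF R' assms(3) measurable_uw(2), of "l2 - l1"] u w
    by auto
  then show "set_integrable lborel {0..} (\<lambda>t. min (\<psi> t) l1 * R t + (min (\<psi> t) l2 - min (\<psi> t) l1) * R' t)"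
    unfolding u_def w_def by (rule set_integral_add)
  have "(LINT t:{0..}|lborel. u t * R t + w t * R' t)
      = (LINT t:{0..}|lborel. u t * R t) + (LINT t:{0..}|lborel. w t * R' t)"
    using integrable by (simp add: set_integral_add)
  also have "\<dots> \<le> l1 * \<beta> + (l2 - l1) * \<beta>'"
    using set_integral_mono_weight_le[OF _ _ R u \<open>mono_on {0..} u\<close> tail]
      set_integral_mono_weight_le[OF _ _ R' w \<open>mono_on {0..} w\<close> tail']
    by (intro add_mono) simp_all
  finally show "(LINT t:{0..}|lborel. min (\<psi> t) l1 * R t + (min (\<psi> t) l2 - min (\<psi> t) l1) * R' t)
      \<le> l1 * \<beta> + (l2 - l1) * \<beta>'"
    by (simp add: u_def w_def)
qed

lemma nn_integral_inverse_square_atLeast: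
  fixes c k :: real
  assumes "0 < c" "0 \<le> k"
  shows "(\<integral>\<^sup>+x. ennreal (k / x\<^sup>2) * indicator {c..} x \<partial>lborel) = ennreal (k / c)"
proof -
  have "((\<lambda>x. k / x) \<longlongrightarrow> 0) at_top"
    by (rule tendsto_divide_0[OF tendsto_const filterlim_at_top_imp_at_infinity[OF filterlim_ident]])
  then have "((\<lambda>x. - (k / x)) \<longlongrightarrow> 0) at_top"
    using tendsto_minus[of _ 0] by fastforce
  then have "(\<integral>\<^sup>+x. ennreal (k / x\<^sup>2) * indicator {c..} x \<partial>lborel) = ennreal (0 - (- (k / c)))"
    using assms
    by (intro nn_integral_FTC_atLeast)
      (auto intro!: derivative_eq_intros simp: power2_eq_square field_simps)
  then show ?thesis by simp
qed

lemma nn_integral_inverse_Icc: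
  fixes c b k :: real
  assumes "0 < c" "c \<le> b" "0 \<le> k"
  shows "(\<integral>\<^sup>+x. ennreal (k / x) * indicator {c..b} x \<partial>lborel) = ennreal (k * (ln b - ln c))"
proof -
  have "(\<integral>\<^sup>+x. ennreal (k / x) * indicator {c..b} x \<partial>lborel) = ennreal (k * ln b - k * ln c)"
    using assms by (intro nn_integral_FTC_Icc) (auto intro!: derivative_eq_intros simp: field_simps)
  then show ?thesis by (simp add: right_diff_distrib)
qed

lemma ln_le_div_exp1: "0 < y \<Longrightarrow> ln y \<le> y / exp (1::real)"
  using ln_le_minus_one[of "y / exp 1"] by (simp add: ln_div)

lemma product_log_le:
  fixes r1 r2 a :: real
  assumes "0 < r1" "0 < r2" "r1 \<le> a" "r2 \<le> a"
  shows "r1 * r2 / a * (2 * ln a - ln r1 - ln r2 + 1)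
    \<le> (r1 + r2) / exp 1 + (1 - 1 / exp 1) * min r1 r2"
proof -
  define s where "s = sqrt (r1 * r2)"
  define q where "q = exp (1/2 :: real)"
  have "0 < a" "0 < s" "0 < q" using assms by (simp_all add: s_def q_def)
  have qq: "q * q = exp 1" by (simp add: q_def flip: exp_add)
  have ss: "s * s = r1 * r2" using assms by (simp add: s_def)
  define y where "y = a / (s * q)"
  \<comment> \<open>\<open>ln y \<le> y - 1\<close> is tight exactly when \<open>a = sqrt (e r1 r2)\<close>\<close>
  have "ln y \<le> y - 1"
    using \<open>0 < a\<close> \<open>0 < s\<close> \<open>0 < q\<close> by (intro ln_le_minus_one) (simp add: y_def)
  moreover have "ln y = ln a - ln s - ln q"
    using \<open>0 < a\<close> \<open>0 < s\<close> \<open>0 < q\<close> by (simp add: y_def ln_div ln_mult)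
  moreover have "2 * ln s = ln r1 + ln r2"
    using assms by (simp add: s_def ln_sqrt ln_mult)
  moreover have "ln q = 1/2" by (simp add: q_def)
  ultimately have "2 * ln a - ln r1 - ln r2 + 1 \<le> 2 * y"
    by linarith
  then have "r1 * r2 / a * (2 * ln a - ln r1 - ln r2 + 1) \<le> r1 * r2 / a * (2 * y)"
    using assms \<open>0 < a\<close> by (intro mult_left_mono) auto
  also have "\<dots> = 2 * s / q"
    using \<open>0 < a\<close> \<open>0 < s\<close> \<open>0 < q\<close> ss by (simp add: y_def field_simps)
  also have "\<dots> \<le> max r1 r2 / exp 1 + min r1 r2"
  proof -
    have "s = sqrt (max r1 r2) * sqrt (min r1 r2)"
      by (simp add: s_def real_sqrt_mult[symmetric] max_def min_def mult.commute)
    moreover have "0 \<le> (sqrt (max r1 r2) - q * sqrt (min r1 r2))\<^sup>2" by simp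
    ultimately have "2 * s * q \<le> max r1 r2 + min r1 r2 * (q * q)"
      using assms by (simp add: power2_eq_square algebra_simps)
    then have "2 * s / q \<le> (max r1 r2 + min r1 r2 * (q * q)) / (q * q)"
      using \<open>0 < q\<close> by (simp add: field_simps)
    also have "\<dots> = max r1 r2 / exp 1 + min r1 r2"
      using \<open>0 < q\<close> qq by (simp add: field_simps)
    finally show ?thesis .
  qed
  also have "\<dots> = (r1 + r2) / exp 1 + (1 - 1 / exp 1) * min r1 r2"
    by (auto simp: max_def min_def field_simps)
  finally show ?thesis .
qed

lemma weighted_pair_le:
  fixes x y l1 l2 p1 p2 q1 q2 c :: real
  assumes "0 \<le> x" "x \<le> l1" "0 \<le> y" "y \<le> l2"
    and "q1 \<le> p1" "q2 \<le> p2" "0 \<le> p1" "0 \<le> p2" "0 \<le> c"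
  shows "x * (q1 - c) + y * (q2 - c)
    \<le> min (x + y) l1 * (p1 + p2 - c) + (min (x + y) l2 - min (x + y) l1) * (p2 - c)"
proof -
  have "x * q1 \<le> min (x + y) l1 * p1"
    using assms by (intro order.trans[OF mult_left_mono mult_right_mono]) auto
  moreover have "y * q2 \<le> min (x + y) l2 * p2"
    using assms by (intro order.trans[OF mult_left_mono mult_right_mono]) auto
  moreover have "min (x + y) l2 * c \<le> (x + y) * c"
    using assms by (intro mult_right_mono) auto
  moreover have "min (x + y) l1 * (p1 + p2 - c) + (min (x + y) l2 - min (x + y) l1) * (p2 - c)
      = min (x + y) l1 * p1 + min (x + y) l2 * p2 - min (x + y) l2 * c"
    by (simp add: algebra_simps)
  ultimately show ?thesis
    by (simp add: algebra_simps)
qed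

lemma cumulative_excess_le:
  fixes G :: "real \<Rightarrow> real"
  assumes [measurable]: "G \<in> borel_measurable borel"
    and G: "\<And>t. 0 \<le> G t" "\<And>t. G t \<le> 1" and "0 \<le> r"
  shows "ennreal (max 0 ((LINT u:{0..t}|lborel. G u) - r))
    \<le> (\<integral>\<^sup>+u. ennreal (G u) * indicator {r..t} u \<partial>lborel)"
proof -
  have integrable: "set_integrable lborel {a..b} G" for a b
    using G by (intro set_integrable_unit_bounded) (auto simp: emeasure_lborel_Icc_eq)
  have nonneg: "0 \<le> (LINT u:{r..t}|lborel. G u)"
    using G unfolding set_lebesgue_integral_def by (intro integral_nonneg_AE) auto
  have "ennreal (LINT u:{0..t}|lborel. G u) = (\<integral>\<^sup>+u. ennreal (G u) * indicator {0..t} u \<partial>lborel)"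
    using integrable G by (intro nn_integral_indicator_eq_set_integral[symmetric]) auto
  also have "\<dots> \<le> (\<integral>\<^sup>+u. indicator {0..<r} u + ennreal (G u) * indicator {r..t} u \<partial>lborel)"
    using G by (intro nn_integral_mono) (auto split: split_indicator)
  also have "\<dots> = ennreal r + (\<integral>\<^sup>+u. ennreal (G u) * indicator {r..t} u \<partial>lborel)"
    using \<open>0 \<le> r\<close> by (subst nn_integral_add) auto
  also have "\<dots> = ennreal (r + (LINT u:{r..t}|lborel. G u))"
    using integrable G nonneg \<open>0 \<le> r\<close>
    by (simp add: nn_integral_indicator_eq_set_integral ennreal_plus)
  finally have "(LINT u:{0..t}|lborel. G u) - r \<le> (LINT u:{r..t}|lborel. G u)"
    using nonneg \<open>0 \<le> r\<close> by (subst (asm) ennreal_le_iff) auto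
  then show ?thesis
    using integrable G nonneg by (simp add: nn_integral_indicator_eq_set_integral ennreal_leI)
qed

text \<open>\<open>G\<close> is the survival function of a law with density \<open>f\<close>; \<open>r\<close> stands for its revenue \<open>Rev\<close>,
of which only \<open>t G t \<le> r\<close> and \<open>r > 0\<close> are used.\<close>

locale survival_density =
  fixes G f :: "real \<Rightarrow> real" and r :: real
  assumes density_measurable [measurable]: "f \<in> borel_measurable borel"
    and density_nonneg: "\<And>x. 0 \<le> f x"
    and survival_eq_nn_integral: "\<And>t. ennreal (G t) = (\<integral>\<^sup>+x. ennreal (f x) * indicator {t..} x \<partial>lborel)"
    and survival_nonneg: "\<And>t. 0 \<le> G t"
    and survival_le_1: "\<And>t. G t \<le> 1"
    and price_times_survival_le: "\<And>t. 0 \<le> t \<Longrightarrow> t * G t \<le> r"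
    and revenue_pos: "0 < r"
begin

lemma survival_antimono: "s \<le> t \<Longrightarrow> G t \<le> G s"
proof -
  assume "s \<le> t"
  then have "(\<integral>\<^sup>+x. ennreal (f x) * indicator {t..} x \<partial>lborel)
      \<le> (\<integral>\<^sup>+x. ennreal (f x) * indicator {s..} x \<partial>lborel)"
    by (intro nn_integral_mono) (auto split: split_indicator)
  then show ?thesis
    using survival_nonneg[of s] by (simp flip: survival_eq_nn_integral)
qed

lemma survival_measurable [measurable]: "G \<in> borel_measurable borel"
proof -
  have "mono (\<lambda>t. - G t)" by (auto intro!: monoI survival_antimono)
  then have "(\<lambda>t. - (- G t)) \<in> borel_measurable borel"
    by (intro borel_measurable_uminus borel_measurable_mono)
  then show ?thesis by simp
qed

lemma survival_le_div: "0 < t \<Longrightarrow> G t \<le> r / t"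
  using price_times_survival_le[of t] by (simp add: field_simps)

lemma set_integrable_survival: "emeasure lborel A < \<infinity> \<Longrightarrow> A \<in> sets borel \<Longrightarrow> set_integrable lborel A G"
  using survival_nonneg survival_le_1 by (intro set_integrable_unit_bounded) auto

lemma set_integral_survival_nonneg: "0 \<le> (LINT u:A|lborel. G u)"
  unfolding set_lebesgue_integral_def using survival_nonneg by (intro integral_nonneg_AE) auto

lemma set_integral_survival_log_le:
  assumes "r \<le> a"
  shows "(LINT u:{r..<a}|lborel. G u) \<le> r * ln (a / r)"
proof -
  have "ennreal (LINT u:{r..<a}|lborel. G u) = (\<integral>\<^sup>+u. ennreal (G u) * indicator {r..<a} u \<partial>lborel)"
    using set_integrable_survival[of "{r..<a}"] survival_nonneg assms
    by (intro nn_integral_indicator_eq_set_integral[symmetric]) auto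
  also have "\<dots> \<le> (\<integral>\<^sup>+u. ennreal (r / u) * indicator {r..a} u \<partial>lborel)"
    using survival_le_div revenue_pos
    by (intro nn_integral_mono) (auto split: split_indicator intro!: ennreal_leI)
  also have "\<dots> = ennreal (r * (ln a - ln r))"
    using revenue_pos assms by (intro nn_integral_inverse_Icc) auto
  finally show ?thesis
    using revenue_pos assms by (subst (asm) ennreal_le_iff) (auto simp: ln_div)
qed

lemma nn_integral_survival_Icc:
  "(\<integral>\<^sup>+u. ennreal (G u) * indicator {a..b} u \<partial>lborel) = ennreal (LINT u:{a..b}|lborel. G u)"
  using set_integrable_survival survival_nonneg
  by (intro nn_integral_indicator_eq_set_integral) (auto simp: emeasure_lborel_Icc_eq)

lemma cumulative_survival_mono: "mono (\<lambda>t. LINT u:{0..t}|lborel. G u)"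
proof (rule monoI)
  fix s t :: real
  assume "s \<le> t"
  then have "(\<integral>\<^sup>+u. ennreal (G u) * indicator {0..s} u \<partial>lborel)
      \<le> (\<integral>\<^sup>+u. ennreal (G u) * indicator {0..t} u \<partial>lborel)"
    by (intro nn_integral_mono) (auto split: split_indicator)
  then show "(LINT u:{0..s}|lborel. G u) \<le> (LINT u:{0..t}|lborel. G u)"
    using set_integral_survival_nonneg by (simp add: nn_integral_survival_Icc)
qed

end

locale survival_pair = A: survival_density G1 f1 r1 + B: survival_density G2 f2 r2
  for G1 f1 r1 G2 f2 r2
begin

text \<open>The paper's \<open>K\<^sub>1\<close> is bounded by \<open>excess - joint\<close>, and \<open>K\<^sub>2\<close> by \<open>swap.excess - joint\<close>.\<close>

definition joint :: "real \<Rightarrow> real" where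
  "joint t = G1 t * G2 t"

definition excess :: "real \<Rightarrow> real" where
  "excess t = f2 t * max 0 ((LINT u:{0..t}|lborel. G1 u) - r1)"

lemma joint_measurable [measurable]: "joint \<in> borel_measurable borel"
  unfolding joint_def by measurable

lemma excess_measurable [measurable]: "excess \<in> borel_measurable borel"
proof -
  have "(\<lambda>t. LINT u:{0..t}|lborel. G1 u) \<in> borel_measurable borel"
    by (rule borel_measurable_mono[OF A.cumulative_survival_mono])
  then show ?thesis
    unfolding excess_def by (intro borel_measurable_times borel_measurable_max) auto
qed

lemma joint_nonneg: "0 \<le> joint t"
  using A.survival_nonneg B.survival_nonneg by (simp add: joint_def)

lemma joint_le_1: "joint t \<le> 1"
  using A.survival_nonneg B.survival_nonneg A.survival_le_1 B.survival_le_1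
  by (simp add: joint_def mult_le_one)

lemma excess_nonneg: "0 \<le> excess t"
  using B.density_nonneg by (simp add: excess_def)

lemma joint_le_inverse_square: "0 < t \<Longrightarrow> joint t \<le> r1 * r2 / t\<^sup>2"
proof -
  assume "0 < t"
  then have "G1 t * G2 t \<le> (r1 / t) * (r2 / t)"
    using A.survival_le_div B.survival_le_div A.survival_nonneg B.survival_nonneg A.revenue_pos
    by (intro mult_mono) auto
  then show ?thesis by (simp add: joint_def power2_eq_square)
qed

lemma nn_integral_joint_tail_le:
  assumes "0 < c"
  shows "(\<integral>\<^sup>+u. ennreal (joint u) * indicator {c..} u \<partial>lborel) \<le> ennreal (r1 * r2 / c)"
proof -
  have "(\<integral>\<^sup>+u. ennreal (joint u) * indicator {c..} u \<partial>lborel)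
      \<le> (\<integral>\<^sup>+u. ennreal (r1 * r2 / u\<^sup>2) * indicator {c..} u \<partial>lborel)"
    using joint_le_inverse_square assms
    by (intro nn_integral_mono) (auto split: split_indicator intro!: ennreal_leI)
  also have "\<dots> = ennreal (r1 * r2 / c)"
    using assms A.revenue_pos B.revenue_pos by (intro nn_integral_inverse_square_atLeast) auto
  finally show ?thesis .
qed

lemma set_integrable_joint:
  assumes "0 \<le> c"
  shows "set_integrable lborel {c..} joint"
proof (rule set_integrableI_nonneg)
  have "(\<integral>\<^sup>+u. ennreal (joint u) * indicator {c..} u \<partial>lborel)
      \<le> (\<integral>\<^sup>+u. indicator {c..<c + r1} u + ennreal (joint u) * indicator {c + r1..} u \<partial>lborel)"
    using joint_le_1 by (intro nn_integral_mono) (auto split: split_indicator)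
  also have "\<dots> = ennreal r1 + (\<integral>\<^sup>+u. ennreal (joint u) * indicator {c + r1..} u \<partial>lborel)"
    using A.revenue_pos by (subst nn_integral_add) auto
  also have "\<dots> < \<infinity>"
    using nn_integral_joint_tail_le[of "c + r1"] assms A.revenue_pos
    by (simp add: ennreal_add_less_top le_less_trans)
  finally show "(\<integral>\<^sup>+u. ennreal (joint u) * indicator {c..} u \<partial>lborel) < \<infinity>" .
qed (auto simp: joint_nonneg)

lemma nn_integral_joint_eq:
  "0 \<le> c \<Longrightarrow> (\<integral>\<^sup>+u. ennreal (joint u) * indicator {c..} u \<partial>lborel) = ennreal (LINT u:{c..}|lborel. joint u)"
  using set_integrable_joint joint_nonneg by (intro nn_integral_indicator_eq_set_integral)

lemma set_integral_joint_nonneg: "0 \<le> (LINT u:A|lborel. joint u)"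
  unfolding set_lebesgue_integral_def using joint_nonneg by (intro integral_nonneg_AE) auto

lemma joint_tail_le: "0 < c \<Longrightarrow> (LINT u:{c..}|lborel. joint u) \<le> r1 * r2 / c"
  using nn_integral_joint_tail_le[of c] nn_integral_joint_eq[of c] A.revenue_pos B.revenue_pos
  by (simp add: ennreal_le_iff)

lemma joint_tail_antimono:
  assumes "0 \<le> a" "a \<le> b"
  shows "(LINT u:{b..}|lborel. joint u) \<le> (LINT u:{a..}|lborel. joint u)"
proof -
  have "(\<integral>\<^sup>+u. ennreal (joint u) * indicator {b..} u \<partial>lborel)
      \<le> (\<integral>\<^sup>+u. ennreal (joint u) * indicator {a..} u \<partial>lborel)"
    using assms by (intro nn_integral_mono) (auto split: split_indicator)
  then show ?thesis
    using assms nn_integral_joint_eq set_integral_joint_nonneg by (simp add: ennreal_le_iff)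
qed

lemma excess_le_nn_integral:
  "ennreal (excess t) \<le> ennreal (f2 t) * (\<integral>\<^sup>+u. ennreal (G1 u) * indicator {r1..t} u \<partial>lborel)"
proof -
  have "ennreal (excess t) = ennreal (f2 t) * ennreal (max 0 ((LINT u:{0..t}|lborel. G1 u) - r1))"
    unfolding excess_def using B.density_nonneg by (simp add: ennreal_mult)
  also have "\<dots> \<le> ennreal (f2 t) * (\<integral>\<^sup>+u. ennreal (G1 u) * indicator {r1..t} u \<partial>lborel)"
    using A.survival_nonneg A.survival_le_1 A.revenue_pos
    by (intro mult_left_mono cumulative_excess_le) auto
  finally show ?thesis .
qed

text \<open>Tonelli applied to \<open>max 0 (H\<^sub>1 t - r\<^sub>1) \<le> \<integral>\<^sub>r\<^sub>1\<^sup>t G\<^sub>1\<close>: integrating out \<open>t\<close> turns \<open>f\<^sub>2\<close> into \<open>G\<^sub>2\<close>.\<close>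

lemma nn_integral_excess_tail_le:
  assumes "0 \<le> a"
  shows "(\<integral>\<^sup>+t. ennreal (excess t) * indicator {a..} t \<partial>lborel)
    \<le> ennreal (G2 a) * (\<integral>\<^sup>+u. ennreal (G1 u) * indicator {r1..<a} u \<partial>lborel)
      + (\<integral>\<^sup>+u. ennreal (joint u) * indicator {max a r1..} u \<partial>lborel)"
proof -
  define F where
    "F t u = ennreal (f2 t) * indicator {a..} t * (ennreal (G1 u) * (if r1 \<le> u \<and> u \<le> t then 1 else 0))"
    for t u
  have [measurable]: "(\<lambda>(t, u). F t u) \<in> borel_measurable (lborel \<Otimes>\<^sub>M lborel)"
    unfolding F_def by measurable
  have "(\<integral>\<^sup>+t. ennreal (excess t) * indicator {a..} t \<partial>lborel)
      \<le> (\<integral>\<^sup>+t. \<integral>\<^sup>+u. F t u \<partial>lborel \<partial>lborel)"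
  proof (intro nn_integral_mono)
    fix t
    have "(\<integral>\<^sup>+u. ennreal (G1 u) * indicator {r1..t} u \<partial>lborel)
        = (\<integral>\<^sup>+u. ennreal (G1 u) * (if r1 \<le> u \<and> u \<le> t then 1 else 0) \<partial>lborel)"
      by (intro nn_integral_cong) (auto split: split_indicator)
    then show "ennreal (excess t) * indicator {a..} t \<le> (\<integral>\<^sup>+u. F t u \<partial>lborel)"
      using excess_le_nn_integral[of t]
      unfolding F_def by (subst nn_integral_cmult) (auto split: split_indicator)
  qed
  also have "\<dots> = (\<integral>\<^sup>+u. \<integral>\<^sup>+t. F t u \<partial>lborel \<partial>lborel)"
    by (rule lborel_pair.Fubini'[symmetric]) simp
  also have "\<dots> = (\<integral>\<^sup>+u. ennreal (G1 u) * indicator {r1..} u * ennreal (G2 (max a u)) \<partial>lborel)"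
  proof (intro nn_integral_cong)
    fix u
    have "(\<integral>\<^sup>+t. F t u \<partial>lborel)
        = (\<integral>\<^sup>+t. ennreal (G1 u) * indicator {r1..} u * (ennreal (f2 t) * indicator {max a u..} t) \<partial>lborel)"
      unfolding F_def by (intro nn_integral_cong) (auto split: split_indicator simp: ac_simps)
    then show "(\<integral>\<^sup>+t. F t u \<partial>lborel) = ennreal (G1 u) * indicator {r1..} u * ennreal (G2 (max a u))"
      by (simp add: nn_integral_cmult B.survival_eq_nn_integral)
  qed
  also have "\<dots> = (\<integral>\<^sup>+u. ennreal (G2 a) * (ennreal (G1 u) * indicator {r1..<a} u)
      + ennreal (joint u) * indicator {max a r1..} u \<partial>lborel)"
    using A.survival_nonneg B.survival_nonneg
    by (intro nn_integral_cong)
      (auto simp: max_def joint_def ennreal_mult mult.commute split: split_indicator)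
  also have "\<dots> = ennreal (G2 a) * (\<integral>\<^sup>+u. ennreal (G1 u) * indicator {r1..<a} u \<partial>lborel)
      + (\<integral>\<^sup>+u. ennreal (joint u) * indicator {max a r1..} u \<partial>lborel)"
    by (subst nn_integral_add) (auto intro!: nn_integral_cmult)
  finally show ?thesis .
qed

lemma excess_tail_le:
  assumes "0 \<le> a"
  shows "set_integrable lborel {a..} excess"
    and "(LINT t:{a..}|lborel. excess t)
      \<le> G2 a * (LINT u:{r1..<a}|lborel. G1 u) + (LINT u:{max a r1..}|lborel. joint u)"
proof -
  have head: "(\<integral>\<^sup>+u. ennreal (G1 u) * indicator {r1..<a} u \<partial>lborel) = ennreal (LINT u:{r1..<a}|lborel. G1 u)"
  proof (cases "r1 \<le> a")
    case True
    then show ?thesis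
      using A.set_integrable_survival[of "{r1..<a}"] A.survival_nonneg
      by (intro nn_integral_indicator_eq_set_integral) auto
  qed (simp add: set_lebesgue_integral_def)
  have bound: "(\<integral>\<^sup>+t. ennreal (excess t) * indicator {a..} t \<partial>lborel)
      \<le> ennreal (G2 a * (LINT u:{r1..<a}|lborel. G1 u) + (LINT u:{max a r1..}|lborel. joint u))"
    using nn_integral_excess_tail_le[OF assms] assms B.survival_nonneg[of a]
      A.set_integral_survival_nonneg set_integral_joint_nonneg
    by (simp add: head nn_integral_joint_eq ennreal_mult ennreal_plus)
  then show integrable: "set_integrable lborel {a..} excess"
    using excess_nonneg by (intro set_integrableI_nonneg) (auto simp: le_less_trans)
  show "(LINT t:{a..}|lborel. excess t)
      \<le> G2 a * (LINT u:{r1..<a}|lborel. G1 u) + (LINT u:{max a r1..}|lborel. joint u)"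
  proof -
    have "ennreal (LINT t:{a..}|lborel. excess t)
        \<le> ennreal (G2 a * (LINT u:{r1..<a}|lborel. G1 u) + (LINT u:{max a r1..}|lborel. joint u))"
      using bound by (simp only: nn_integral_indicator_eq_set_integral[OF integrable excess_nonneg])
    then show ?thesis
      using B.survival_nonneg[of a] A.set_integral_survival_nonneg set_integral_joint_nonneg
      by (subst (asm) ennreal_le_iff) auto
  qed
qed

lemma boundary_term_le_log:
  assumes "r1 \<le> a"
  shows "G2 a * (LINT u:{r1..<a}|lborel. G1 u) \<le> r1 * r2 / a * ln (a / r1)"
proof -
  have "0 < a" using assms A.revenue_pos by simp
  have "G2 a * (LINT u:{r1..<a}|lborel. G1 u) \<le> r2 / a * (r1 * ln (a / r1))"
    using B.survival_le_div[OF \<open>0 < a\<close>] B.survival_nonneg A.set_integral_survival_nonneg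
      B.revenue_pos \<open>0 < a\<close>
      A.set_integral_survival_log_le[OF assms]
    by (intro mult_mono) auto
  then show ?thesis by (simp add: ac_simps)
qed

lemma boundary_term_le_exp: "G2 a * (LINT u:{r1..<a}|lborel. G1 u) \<le> r2 / exp 1"
proof (cases "r1 \<le> a")
  case True
  then have "0 < a" using A.revenue_pos by simp
  have "r1 * r2 / a * ln (a / r1) \<le> r1 * r2 / a * ((a / r1) / exp 1)"
    using \<open>0 < a\<close> A.revenue_pos B.revenue_pos by (intro mult_left_mono ln_le_div_exp1) auto
  also have "\<dots> = r2 / exp 1"
    using \<open>0 < a\<close> A.revenue_pos by simp
  finally show ?thesis using boundary_term_le_log[OF True] by simp
next
  case False
  then show ?thesis using B.revenue_pos by (simp add: set_lebesgue_integral_def)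
qed

end

sublocale survival_pair \<subseteq> swap: survival_pair G2 f2 r2 G1 f1 r1 ..

context survival_pair
begin

lemma swap_joint: "swap.joint = joint"
  by (simp add: fun_eq_iff joint_def swap.joint_def)

lemma set_integrable_net_tail:
  assumes "0 \<le> a"
  shows "set_integrable lborel {a..} (\<lambda>t. excess t + swap.excess t - joint t)"
    and "set_integrable lborel {a..} (\<lambda>t. swap.excess t - joint t)"
  using excess_tail_le(1) swap.excess_tail_le(1) set_integrable_joint assms
  by (auto intro!: set_integral_add set_integral_diff)

lemma set_integral_net_tail:
  assumes "0 \<le> a"
  shows "(LINT t:{a..}|lborel. excess t + swap.excess t - joint t)
    = (LINT t:{a..}|lborel. excess t) + (LINT t:{a..}|lborel. swap.excess t) - (LINT t:{a..}|lborel. joint t)"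
  using excess_tail_le(1) swap.excess_tail_le(1) set_integrable_joint assms
  by (simp add: set_integral_diff set_integral_add)

lemma net_tail_le_below:
  assumes "0 \<le> a" "a < r2"
  shows "(LINT t:{a..}|lborel. excess t + swap.excess t - joint t) \<le> r2 / exp 1 + r1"
proof -
  have "(LINT u:{max a r1..}|lborel. joint u) \<le> (LINT u:{a..}|lborel. joint u)"
    using assms by (intro joint_tail_antimono) auto
  then have "(LINT t:{a..}|lborel. excess t) \<le> r2 / exp 1 + (LINT u:{a..}|lborel. joint u)"
    using excess_tail_le(2)[OF assms(1)] boundary_term_le_exp[of a] by linarith
  moreover have "(LINT t:{a..}|lborel. swap.excess t) \<le> (LINT u:{r2..}|lborel. joint u)"
    using swap.excess_tail_le(2)[OF assms(1)] assms by (simp add: swap_joint set_lebesgue_integral_def)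
  moreover have "(LINT u:{r2..}|lborel. joint u) \<le> r1"
    using joint_tail_le[of r2] B.revenue_pos by simp
  ultimately show ?thesis
    using set_integral_net_tail[OF assms(1)] by linarith
qed

lemma net_tail_le_above:
  assumes "r1 \<le> a" "r2 \<le> a"
  shows "(LINT t:{a..}|lborel. excess t + swap.excess t - joint t)
    \<le> r1 * r2 / a * (2 * ln a - ln r1 - ln r2 + 1)"
proof -
  have "0 < a" using assms A.revenue_pos by simp
  have "(LINT t:{a..}|lborel. excess t + swap.excess t - joint t)
      \<le> G2 a * (LINT u:{r1..<a}|lborel. G1 u) + G1 a * (LINT u:{r2..<a}|lborel. G2 u)
        + (LINT u:{a..}|lborel. joint u)"
  proof -
    have "max a r1 = a" "max a r2 = a" using assms by auto
    then show ?thesis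
      using set_integral_net_tail[of a] excess_tail_le(2)[of a] swap.excess_tail_le(2)[of a] \<open>0 < a\<close>
      by (simp add: swap_joint)
  qed
  also have "\<dots> \<le> r1 * r2 / a * ln (a / r1) + r2 * r1 / a * ln (a / r2) + r1 * r2 / a"
    using boundary_term_le_log[OF assms(1)] swap.boundary_term_le_log[OF assms(2)] joint_tail_le[OF \<open>0 < a\<close>]
    by (intro add_mono) auto
  also have "\<dots> = r1 * r2 / a * (2 * ln a - ln r1 - ln r2 + 1)"
    using \<open>0 < a\<close> A.revenue_pos B.revenue_pos by (simp add: ln_div field_simps)
  finally show ?thesis .
qed

end

text \<open>Re-entering the context makes the lemmas above available for the instance \<open>swap\<close>.\<close>

context survival_pair
begin

lemma net_tail_le:
  assumes "0 \<le> a"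
  shows "(LINT t:{a..}|lborel. excess t + swap.excess t - joint t)
    \<le> (r1 + r2) / exp 1 + (1 - 1 / exp 1) * min r1 r2"
proof (cases "r1 \<le> a \<and> r2 \<le> a")
  case True
  then show ?thesis
    using net_tail_le_above product_log_le A.revenue_pos B.revenue_pos by (meson order.trans)
next
  case False
  show ?thesis
  proof (cases "r1 \<le> r2")
    case True
    then have "a < r2" using False by auto
    then have "(LINT t:{a..}|lborel. excess t + swap.excess t - joint t) \<le> r2 / exp 1 + r1"
      by (rule net_tail_le_below[OF assms])
    also have "\<dots> = (r1 + r2) / exp 1 + (1 - 1 / exp 1) * min r1 r2"
      using True by (simp add: min_def field_simps)
    finally show ?thesis .
  next
    case r2_lt: False
    have "(LINT t:{a..}|lborel. excess t + swap.excess t - joint t)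
        = (LINT t:{a..}|lborel. swap.excess t + excess t - swap.joint t)"
      by (simp add: swap_joint add.commute)
    also have "\<dots> \<le> r1 / exp 1 + r2"
      using swap.net_tail_le_below[OF assms] False r2_lt by simp
    also have "\<dots> = (r1 + r2) / exp 1 + (1 - 1 / exp 1) * min r1 r2"
      using r2_lt by (simp add: min_def field_simps)
    finally show ?thesis .
  qed
qed

lemma swap_net_tail_le:
  assumes "0 \<le> a"
  shows "(LINT t:{a..}|lborel. swap.excess t - joint t) \<le> r1 / exp 1"
proof -
  have "(LINT t:{a..}|lborel. swap.excess t - joint t)
      = (LINT t:{a..}|lborel. swap.excess t) - (LINT t:{a..}|lborel. joint t)"
    using swap.excess_tail_le(1) set_integrable_joint assms by (simp add: set_integral_diff)
  moreover have "(LINT u:{max a r2..}|lborel. joint u) \<le> (LINT u:{a..}|lborel. joint u)"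
    using joint_tail_antimono[OF assms max.cobounded1] .
  ultimately show ?thesis
    using swap.excess_tail_le(2)[OF assms] swap.boundary_term_le_exp[of a] by (simp add: swap_joint)
qed

lemma weighted_integrand_le:
  assumes "0 \<le> x" "x \<le> l1" "0 \<le> y" "y \<le> l2"
  shows "x * (f2 t * ((LINT u:{0..t}|lborel. G1 u) - r1) - G1 t * G2 t)
      + y * (f1 t * ((LINT u:{0..t}|lborel. G2 u) - r2) - G1 t * G2 t)
    \<le> min (x + y) l1 * (excess t + swap.excess t - joint t)
      + (min (x + y) l2 - min (x + y) l1) * (swap.excess t - joint t)"
proof -
  have "f2 t * ((LINT u:{0..t}|lborel. G1 u) - r1) \<le> excess t"
    "f1 t * ((LINT u:{0..t}|lborel. G2 u) - r2) \<le> swap.excess t"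
    unfolding excess_def swap.excess_def using A.density_nonneg B.density_nonneg
    by (auto intro: mult_left_mono)
  from weighted_pair_le[OF assms this excess_nonneg swap.excess_nonneg joint_nonneg]
  show ?thesis by (simp add: joint_def)
qed

lemma weighted_integral_le:
  fixes \<phi>1 \<phi>2 :: "real \<Rightarrow> real" and l1 l2 :: real
  assumes "0 < l1" "l1 \<le> l2"
    and [measurable]: "\<phi>1 \<in> borel_measurable borel" "\<phi>2 \<in> borel_measurable borel"
    and \<phi>1: "\<forall>t\<ge>0. 0 \<le> \<phi>1 t \<and> \<phi>1 t \<le> l1" and \<phi>2: "\<forall>t\<ge>0. 0 \<le> \<phi>2 t \<and> \<phi>2 t \<le> l2"
    and mono: "mono_on {0..} (\<lambda>t. \<phi>1 t + \<phi>2 t)"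
    and integrable: "set_integrable lborel {0..} (\<lambda>t.
        \<phi>1 t * (f2 t * ((LINT u:{0..t}|lborel. G1 u) - r1) - G1 t * G2 t)
      + \<phi>2 t * (f1 t * ((LINT u:{0..t}|lborel. G2 u) - r2) - G1 t * G2 t))"
  shows "(LINT t:{0..}|lborel.
        \<phi>1 t * (f2 t * ((LINT u:{0..t}|lborel. G1 u) - r1) - G1 t * G2 t)
      + \<phi>2 t * (f1 t * ((LINT u:{0..t}|lborel. G2 u) - r2) - G1 t * G2 t))
    \<le> (1 / exp 1) * (l2 * r1 + l1 * r2 + l1 * (exp 1 - 1) * min r1 r2)"
proof -
  have bounds_nonneg: "0 \<le> (r1 + r2) / exp 1 + (1 - 1 / exp 1) * min r1 r2" "0 \<le> r1 / exp 1"
    using A.revenue_pos B.revenue_pos by (auto intro!: add_nonneg_nonneg mult_nonneg_nonneg)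
  have sum_nonneg: "0 \<le> \<phi>1 t + \<phi>2 t" if "0 \<le> t" for t
    using \<phi>1 \<phi>2 that by auto
  note truncated = set_integral_truncated_weights_le[OF _ _ _
      set_integrable_net_tail[OF order.refl] sum_nonneg mono less_imp_le[OF assms(1)] assms(2)
      net_tail_le bounds_nonneg(1) swap_net_tail_le bounds_nonneg(2)]
  have "(LINT t:{0..}|lborel.
        \<phi>1 t * (f2 t * ((LINT u:{0..t}|lborel. G1 u) - r1) - G1 t * G2 t)
      + \<phi>2 t * (f1 t * ((LINT u:{0..t}|lborel. G2 u) - r2) - G1 t * G2 t))
      \<le> (LINT t:{0..}|lborel. min (\<phi>1 t + \<phi>2 t) l1 * (excess t + swap.excess t - joint t)
        + (min (\<phi>1 t + \<phi>2 t) l2 - min (\<phi>1 t + \<phi>2 t) l1) * (swap.excess t - joint t))"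
  proof (rule set_integral_mono[OF integrable truncated(1)])
    fix t :: real assume "t \<in> {0..}"
    then show "\<phi>1 t * (f2 t * ((LINT u:{0..t}|lborel. G1 u) - r1) - G1 t * G2 t)
        + \<phi>2 t * (f1 t * ((LINT u:{0..t}|lborel. G2 u) - r2) - G1 t * G2 t)
      \<le> min (\<phi>1 t + \<phi>2 t) l1 * (excess t + swap.excess t - joint t)
        + (min (\<phi>1 t + \<phi>2 t) l2 - min (\<phi>1 t + \<phi>2 t) l1) * (swap.excess t - joint t)"
      using \<phi>1 \<phi>2 by (intro weighted_integrand_le) auto
  qed (measurable)
  also have "\<dots> \<le> l1 * ((r1 + r2) / exp 1 + (1 - 1 / exp 1) * min r1 r2) + (l2 - l1) * (r1 / exp 1)"
    by (rule truncated(2)) measurable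
  also have "\<dots> = (1 / exp 1) * (l2 * r1 + l1 * r2 + l1 * (exp 1 - 1) * min r1 r2)"
    by (simp add: field_simps)
  finally show ?thesis .
qed

end

lemma surv_eq_nn_integral:
  assumes "prob_space M" and distr: "distributed M lborel X (\<lambda>x. ennreal (f x))"
  shows "ennreal (surv M X t) = (\<integral>\<^sup>+x. ennreal (f x) * indicator {t..} x \<partial>lborel)"
proof -
  interpret prob_space M by fact
  have "X -` {t..} \<inter> space M = {\<omega> \<in> space M. X \<omega> \<ge> t}" by auto
  then show ?thesis
    using distributed_emeasure[OF distr, of "{t..}"] by (simp add: surv_def emeasure_eq_measure)
qed

lemma price_times_surv_le_Rev:
  "bdd_above {p * surv M X p | p. p \<ge> 0} \<Longrightarrow> 0 \<le> t \<Longrightarrow> t * surv M X t \<le> Rev M X"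
  unfolding Rev_def by (rule cSup_upper) auto

lemma Rev_pos:
  assumes "prob_space M" and [measurable]: "f \<in> borel_measurable borel"
    and distr: "distributed M lborel X (\<lambda>x. ennreal (f x))" and "\<forall>\<omega>\<in>space M. X \<omega> \<ge> 0"
    and bdd: "bdd_above {p * surv M X p | p. p \<ge> 0}"
  shows "0 < Rev M X"
proof (rule ccontr)
  interpret prob_space M by fact
  assume "\<not> 0 < Rev M X"
  then have "t * surv M X t \<le> 0" if "0 < t" for t
    using price_times_surv_le_Rev[OF bdd, of t] that by simp
  then have "surv M X t = 0" if "0 < t" for t
    using that by (simp add: surv_def mult_le_0_iff measure_le_0_iff)
  then have "AE x in lborel. ennreal (f x) * indicator {1 / Suc n..} x = 0" for n :: nat
    using surv_eq_nn_integral[OF assms(1) distr, of "1 / Suc n"]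
    by (intro nn_integral_0_iff_AE[THEN iffD1]) auto
  then have "AE x in lborel. \<forall>n::nat. ennreal (f x) * indicator {1 / Suc n..} x = 0"
    by (simp only: AE_all_countable) blast
  moreover have "AE x in lborel. x \<noteq> 0" by (rule AE_lborel_singleton)
  ultimately have "AE x in lborel. ennreal (f x) * indicator {0..} x = 0"
  proof eventually_elim
    case (elim x)
    show ?case
    proof (cases "0 < x")
      case True
      then obtain n where "inverse (real (Suc n)) < x" using reals_Archimedean by blast
      then show ?thesis using elim(1)[rule_format, of n] by (simp add: field_simps indicator_def)
    qed (use elim(2) in simp)
  qed
  then have "ennreal (surv M X 0) = 0"
    by (simp add: surv_eq_nn_integral[OF assms(1) distr] nn_integral_0_iff_AE)
  moreover have "{\<omega> \<in> space M. 0 \<le> X \<omega>} = space M"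
    using assms(4) by auto
  then have "surv M X 0 = 1"
    by (simp add: surv_def prob_space)
  ultimately show False by simp
qed

lemma survival_density_surv:
  assumes "prob_space M" "f \<in> borel_measurable borel" "\<forall>x. f x \<ge> 0"
    and "distributed M lborel X (\<lambda>x. ennreal (f x))" "\<forall>\<omega>\<in>space M. X \<omega> \<ge> 0"
    and "bdd_above {p * surv M X p | p. p \<ge> 0}"
  shows "survival_density (surv M X) f (Rev M X)"
proof -
  interpret prob_space M by fact
  show ?thesis
    using assms price_times_surv_le_Rev surv_eq_nn_integral Rev_pos
    by unfold_locales (auto simp: surv_def)
qed

theorem proposition4:
  fixes M :: "'a measure" and X1 X2 :: "'a \<Rightarrow> real"
    and f1 f2 :: "real \<Rightarrow> real" and l1 l2 :: real
  assumes "prob_space M"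
    and "f1 \<in> borel_measurable borel" and "f2 \<in> borel_measurable borel"
    and "\<forall>x. f1 x \<ge> 0" and "\<forall>x. f2 x \<ge> 0"
    and "distributed M lborel X1 (\<lambda>x. ennreal (f1 x))"
    and "distributed M lborel X2 (\<lambda>x. ennreal (f2 x))"
    and "\<forall>\<omega>\<in>space M. X1 \<omega> \<ge> 0" and "\<forall>\<omega>\<in>space M. X2 \<omega> \<ge> 0"
    and "bdd_above {p * surv M X1 p | p. p \<ge> 0}"
    and "bdd_above {p * surv M X2 p | p. p \<ge> 0}"
    and "0 < l1" and "l1 \<le> l2" and "l2 \<le> 1"
  shows "\<forall>\<phi>1 \<phi>2 :: real \<Rightarrow> real.
     \<phi>1 \<in> borel_measurable borel \<and> \<phi>2 \<in> borel_measurable borel \<and>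
     (\<forall>t\<ge>0. 0 \<le> \<phi>1 t \<and> \<phi>1 t \<le> l1) \<and>
     (\<forall>t\<ge>0. 0 \<le> \<phi>2 t \<and> \<phi>2 t \<le> l2) \<and>
     mono_on {0..} (\<lambda>t. \<phi>1 t + \<phi>2 t) \<and>
     set_integrable lborel {0..} (\<lambda>t.
        \<phi>1 t * (f2 t * (cumsurv M X1 t - Rev M X1) - surv M X1 t * surv M X2 t)
      + \<phi>2 t * (f1 t * (cumsurv M X2 t - Rev M X2) - surv M X1 t * surv M X2 t))
     \<longrightarrow>
     (LINT t:{0..}|lborel.
        \<phi>1 t * (f2 t * (cumsurv M X1 t - Rev M X1) - surv M X1 t * surv M X2 t)
      + \<phi>2 t * (f1 t * (cumsurv M X2 t - Rev M X2) - surv M X1 t * surv M X2 t))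
     \<le> (1 / exp 1) * (l2 * Rev M X1 + l1 * Rev M X2
                       + l1 * (exp 1 - 1) * min (Rev M X1) (Rev M X2))"
proof -
  interpret survival_pair "surv M X1" f1 "Rev M X1" "surv M X2" f2 "Rev M X2"
    unfolding survival_pair_def
    using survival_density_surv[OF assms(1,2,4,6,8,10)] survival_density_surv[OF assms(1,3,5,7,9,11)]
    by blast
  show ?thesis
    using weighted_integral_le[OF assms(12,13)] unfolding cumsurv_def by blast
qed

end
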